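(* Let $\sigma_1=\sigma_x,\sigma_2=\sigma_y,\sigma_3=\sigma_z$ be the Pauli matrices. For $\underline{\lambda}=(\lambda_1,\lambda_2,\lambda_3)\in\mathbb{R}^3$ let $U_{\underline{\lambda}}=\exp\{-i\sum_{j=1}^3\lambda_j\,\sigma_j\otimes\sigma_j\}$ act on $\mathbb{C}^2\otimes\mathbb{C}^2$. Let $|\psi_0\rangle$ be any normalized two-qubit pure state and $|\psi_{\underline{\lambda}}\rangle=U_{\underline{\lambda}}|\psi_0\rangle$. Then the Uhlmann curvature (incompatibility) matrix $D$ of the model $\underline{\lambda}\mapsto|\psi_{\underline{\lambda}}\rangle$ vanishes identically: $D_{jk}=0$ for all $j,k\in\{1,2,3\}$, every $\underline{\lambda}$ and every probe $|\psi_0\rangle$.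
   Context: For a pure-state model $\underline{\lambda}\mapsto|\psi_{\underline{\lambda}}\rangle$, with $\partial_j=\partial/\partial\lambda_j$, the Uhlmann curvature matrix is $D_{jk}=4\,\mathrm{Im}\big[\langle\partial_j\psi|\partial_k\psi\rangle-\langle\partial_j\psi|\psi\rangle\langle\psi|\partial_k\psi\rangle\big]$ (equivalently $D_{jk}=-\tfrac{i}{2}\mathrm{Tr}[\rho[L_j,L_k]]$ with $L_j$ the symmetric logarithmic derivatives of $\rho=|\psi_{\underline{\lambda}}\rangle\langle\psi_{\underline{\lambda}}|$). *)

theory Defs
  imports "HOL-Analysis.Analysis"
begin

text \<open>Single-qubit basis index type 2,
  with element 1 = first basis vector, element 2 (= 0) = second basis vector.\<close>

type_synonym qubit_op = "complex^2^2"
type_synonym two_qubit_vec = "complex^(2 \<times> 2)"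
type_synonym two_qubit_op = "complex^(2 \<times> 2)^(2 \<times> 2)"

definition mk2 :: "complex \<Rightarrow> complex \<Rightarrow> complex \<Rightarrow> complex \<Rightarrow> qubit_op" where
  "mk2 a b c d = (\<chi> i j. if i = 1 then (if j = 1 then a else b)
                              else (if j = 1 then c else d))"

definition pauli_x :: qubit_op where "pauli_x = mk2 0 1 1 0"
definition pauli_y :: qubit_op where "pauli_y = mk2 0 (- \<i>) \<i> 0"
definition pauli_z :: qubit_op where "pauli_z = mk2 1 0 0 (-1)"

text \<open>sigma 1 = sigma_x, sigma 2 = sigma_y, sigma 3 = sigma_z (index type 3, where 3 = 0).\<close>
definition pauli :: "3 \<Rightarrow> qubit_op" where
  "pauli j = (if j = 1 then pauli_x else if j = 2 then pauli_y else pauli_z)"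

definition kron :: "qubit_op \<Rightarrow> qubit_op \<Rightarrow> two_qubit_op" where
  "kron A B = (\<chi> p q. A$(fst p)$(fst q) * B$(snd p)$(snd q))"

primrec mpow :: "complex^'n^'n \<Rightarrow> nat \<Rightarrow> complex^'n^'n" where
  "mpow A 0 = mat 1"
| "mpow A (Suc n) = A ** mpow A n"

definition mexp :: "complex^'n^'n \<Rightarrow> complex^'n^'n" where
  "mexp A = (\<chi> i j. (\<Sum>n. (mpow A n)$i$j / of_nat (fact n)))"

definition U_lam :: "real^3 \<Rightarrow> two_qubit_op" where
  "U_lam lam = mexp (\<chi> a b. - \<i> * (\<Sum>j\<in>UNIV. of_real (lam$j) * (kron (pauli j) (pauli j))$a$b))"

definition braket :: "complex^'n \<Rightarrow> complex^'n \<Rightarrow> complex" where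
  "braket u v = (\<Sum>i\<in>UNIV. cnj (u$i) * v$i)"

definition pdiff :: "(real^'m \<Rightarrow> complex^'n) \<Rightarrow> real^'m \<Rightarrow> 'm \<Rightarrow> complex^'n" where
  "pdiff psi lam j = vector_derivative (\<lambda>t. psi (lam + t *\<^sub>R axis j 1)) (at 0)"

definition uhlmann_D :: "(real^'m \<Rightarrow> complex^'n) \<Rightarrow> real^'m \<Rightarrow> 'm \<Rightarrow> 'm \<Rightarrow> real" where
  "uhlmann_D psi lam j k = 4 * Im (braket (pdiff psi lam j) (pdiff psi lam k)
       - braket (pdiff psi lam j) (psi lam) * braket (psi lam) (pdiff psi lam k))"

end

theory Submission
  imports Defs
begin

(*
  The generators \<sigma>\<^sub>j \<otimes> \<sigma>\<^sub>j commute: all three are diagonal in the Bell basis, with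
  eigenvalues s c j = +1 or -1 on the c-th Bell state. Writing P c for the Bell projections,
  psi(lam) = (SUM c. exp (-i theta c lam) P c psi0) with linear phases theta c lam = (SUM j. s c j lam j),
  so d/dlam j just multiplies the c-th orthogonal component by -i s c j. With r c = |P c psi0|^2,
  <d_j psi|d_k psi> = (SUM c. s c j s c k r c) is real, and
  <d_j psi|psi> <psi|d_k psi> = (i SUM c. s c j r c) (-i SUM c. s c k r c) is real as well,
  so every D j k vanishes.
*)

lemma braket_vector_smult: "braket (a *s u) (b *s v) = cnj a * b * braket u v"
  by (simp add: braket_def sum_distrib_left mult_ac)

lemma braket_sum_left: "braket (\<Sum>c\<in>C. f c) v = (\<Sum>c\<in>C. braket (f c) v)"
  by (simp add: braket_def sum_component sum_distrib_right sum.swap[of _ UNIV])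

lemma braket_sum_right: "braket v (\<Sum>c\<in>C. f c) = (\<Sum>c\<in>C. braket v (f c))"
  by (simp add: braket_def sum_component sum_distrib_left sum.swap[of _ UNIV])

lemma braket_self: "braket v v = of_real ((norm v)\<^sup>2)"
proof -
  have "(norm v)\<^sup>2 = (\<Sum>i\<in>UNIV. (cmod (v $ i))\<^sup>2)"
    by (simp add: norm_vec_def L2_set_def sum_nonneg)
  then show ?thesis
    by (simp add: braket_def complex_norm_square[symmetric] mult.commute)
qed

lemma braket_orthogonal_sum:
  assumes "finite C" and orth: "pairwise (\<lambda>c c'. braket (w c) (w c') = 0) C"
  shows "braket (\<Sum>c\<in>C. x c *s w c) (\<Sum>c\<in>C. y c *s w c)
    = (\<Sum>c\<in>C. cnj (x c) * y c * of_real ((norm (w c))\<^sup>2))"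
proof -
  have "braket (\<Sum>c\<in>C. x c *s w c) (\<Sum>c\<in>C. y c *s w c)
      = (\<Sum>c'\<in>C. \<Sum>c\<in>C. cnj (x c) * y c' * braket (w c) (w c'))"
    by (simp add: braket_sum_left braket_sum_right braket_vector_smult)
  also have "\<dots> = (\<Sum>c'\<in>C. \<Sum>c\<in>C. if c = c' then cnj (x c) * y c * braket (w c) (w c) else 0)"
    using orth by (intro sum.cong refl) (auto simp: pairwise_def)
  also have "\<dots> = (\<Sum>c\<in>C. cnj (x c) * y c * of_real ((norm (w c))\<^sup>2))"
    by (simp add: assms(1) braket_self)
  finally show ?thesis .
qed

lemma mpow_spectral:
  fixes A :: "complex^'n^'n" and P :: "'c \<Rightarrow> complex^'n^'n"
  assumes "finite C"
    and proj: "\<And>c c'. c \<in> C \<Longrightarrow> c' \<in> C \<Longrightarrow> P c ** P c' = (if c = c' then P c else 0)"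
    and resolution: "(\<Sum>c\<in>C. P c) = mat 1"
    and A: "\<And>i j. A $ i $ j = (\<Sum>c\<in>C. \<mu> c * P c $ i $ j)"
  shows "mpow A n $ i $ j = (\<Sum>c\<in>C. \<mu> c ^ n * P c $ i $ j)"
proof (induction n arbitrary: i j)
  case 0
  have "mat 1 $ i $ j = (\<Sum>c\<in>C. P c $ i $ j)"
    by (simp flip: resolution add: sum_component)
  then show ?case by simp
next
  case (Suc n)
  have "mpow A (Suc n) $ i $ j = (\<Sum>k\<in>UNIV. A $ i $ k * mpow A n $ k $ j)"
    by (simp add: matrix_matrix_mult_def)
  also have "\<dots> = (\<Sum>k\<in>UNIV. \<Sum>c\<in>C. \<Sum>c'\<in>C. \<mu> c * \<mu> c' ^ n * (P c $ i $ k * P c' $ k $ j))"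
    by (simp add: A Suc sum_product mult_ac)
  also have "\<dots> = (\<Sum>c\<in>C. \<Sum>c'\<in>C. \<Sum>k\<in>UNIV. \<mu> c * \<mu> c' ^ n * (P c $ i $ k * P c' $ k $ j))"
    by (subst sum.swap) (intro sum.cong refl sum.swap)
  also have "\<dots> = (\<Sum>c\<in>C. \<Sum>c'\<in>C. \<mu> c * \<mu> c' ^ n * (\<Sum>k\<in>UNIV. P c $ i $ k * P c' $ k $ j))"
    by (simp add: sum_distrib_left)
  also have "\<dots> = (\<Sum>c\<in>C. \<Sum>c'\<in>C. \<mu> c * \<mu> c' ^ n * (P c ** P c') $ i $ j)"
    by (simp add: matrix_matrix_mult_def)
  also have "\<dots> = (\<Sum>c\<in>C. \<Sum>c'\<in>C. if c' = c then \<mu> c * \<mu> c' ^ n * P c $ i $ j else 0)"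
    by (intro sum.cong refl) (simp add: proj)
  also have "\<dots> = (\<Sum>c\<in>C. \<mu> c ^ Suc n * P c $ i $ j)"
    by (simp add: assms(1))
  finally show ?case .
qed

lemma mexp_spectral:
  fixes A :: "complex^'n^'n" and P :: "'c \<Rightarrow> complex^'n^'n"
  assumes "finite C"
    and "\<And>c c'. c \<in> C \<Longrightarrow> c' \<in> C \<Longrightarrow> P c ** P c' = (if c = c' then P c else 0)"
    and "(\<Sum>c\<in>C. P c) = mat 1"
    and "\<And>i j. A $ i $ j = (\<Sum>c\<in>C. \<mu> c * P c $ i $ j)"
  shows "mexp A $ i $ j = (\<Sum>c\<in>C. exp (\<mu> c) * P c $ i $ j)"
proof -
  have "(\<lambda>n. \<Sum>c\<in>C. (\<mu> c ^ n /\<^sub>R fact n) * P c $ i $ j) sums (\<Sum>c\<in>C. exp (\<mu> c) * P c $ i $ j)"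
    by (intro sums_sum sums_mult2 exp_converges)
  then have "(\<lambda>n. mpow A n $ i $ j / of_nat (fact n)) sums (\<Sum>c\<in>C. exp (\<mu> c) * P c $ i $ j)"
    by (simp add: mpow_spectral[OF assms] sum_divide_distrib scaleR_conv_of_real field_simps)
  then show ?thesis
    by (simp add: mexp_def sums_iff)
qed

lemma bounded_linear_vector_smult_left: "bounded_linear (\<lambda>z::complex. z *s w)"
  unfolding linear_conv_bounded_linear[symmetric]
  by (rule linearI) (auto simp: vec_eq_iff algebra_simps)

(* The shape of exp (-i SUM j. lam j H j) psi0 for simultaneously diagonal H j:
   g c j is the eigenvalue of H j on the c-th eigenspace, w c the component of psi0 there. *)
definition phase_model ::
    "'c set \<Rightarrow> ('c \<Rightarrow> 'm \<Rightarrow> real) \<Rightarrow> ('c \<Rightarrow> complex^'n) \<Rightarrow> real^'m \<Rightarrow> complex^'n" where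
  "phase_model C g w lam = (\<Sum>c\<in>C. exp (- \<i> * of_real (\<Sum>i\<in>UNIV. g c i * lam $ i)) *s w c)"

lemma pdiff_phase_model:
  "pdiff (phase_model C g w) lam j
    = (\<Sum>c\<in>C. (- \<i> * of_real (g c j) * exp (- \<i> * of_real (\<Sum>i\<in>UNIV. g c i * lam $ i))) *s w c)"
proof -
  have line: "(\<Sum>i\<in>UNIV. g c i * (lam + t *\<^sub>R axis j 1) $ i) = (\<Sum>i\<in>UNIV. g c i * lam $ i) + t * g c j"
    for c t
    by (simp add: axis_def algebra_simps sum.distrib if_distrib[of "\<lambda>x. _ * x"] cong: if_cong)
  have "((\<lambda>t. exp (- \<i> * of_real (\<Sum>i\<in>UNIV. g c i * lam $ i) + of_real t * (- \<i> * of_real (g c j))))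
      has_vector_derivative (- \<i> * of_real (g c j) * exp (- \<i> * of_real (\<Sum>i\<in>UNIV. g c i * lam $ i)))) (at 0)"
    for c
    by (rule has_vector_derivative_real_field) (auto intro!: derivative_eq_intros)
  then have "((\<lambda>t. phase_model C g w (lam + t *\<^sub>R axis j 1)) has_vector_derivative
      (\<Sum>c\<in>C. (- \<i> * of_real (g c j) * exp (- \<i> * of_real (\<Sum>i\<in>UNIV. g c i * lam $ i))) *s w c)) (at 0)"
    unfolding phase_model_def line
    by (intro has_vector_derivative_sum bounded_linear.has_vector_derivative[OF bounded_linear_vector_smult_left])
      (simp add: algebra_simps)
  then show ?thesis
    unfolding pdiff_def by (rule vector_derivative_at)
qed

lemma cnj_mult_self_exp_imaginary: "cnj (exp (- \<i> * of_real x)) * exp (- \<i> * of_real x) = 1"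
  by (simp add: exp_cnj exp_add[symmetric])

theorem uhlmann_D_phase_model:
  assumes "finite C" and "pairwise (\<lambda>c c'. braket (w c) (w c') = 0) C"
  shows "uhlmann_D (phase_model C g w) lam j k = 0"
proof -
  define e where "e c = exp (- \<i> * of_real (\<Sum>i\<in>UNIV. g c i * lam $ i))" for c
  define \<rho> where "\<rho> c = (norm (w c))\<^sup>2" for c
  have unit: "cnj (e c) * e c = 1" for c
    unfolding e_def by (rule cnj_mult_self_exp_imaginary)
  have psi: "phase_model C g w lam = (\<Sum>c\<in>C. e c *s w c)"
    by (simp add: phase_model_def e_def)
  have dpsi: "pdiff (phase_model C g w) lam i = (\<Sum>c\<in>C. (- \<i> * of_real (g c i) * e c) *s w c)" for i
    by (simp add: pdiff_phase_model e_def)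
  have "braket (pdiff (phase_model C g w) lam j) (pdiff (phase_model C g w) lam k)
      = (\<Sum>c\<in>C. of_real (g c j * g c k * \<rho> c) * (cnj (e c) * e c))"
    unfolding dpsi braket_orthogonal_sum[OF assms] by (simp add: \<rho>_def algebra_simps)
  moreover have "braket (pdiff (phase_model C g w) lam j) (phase_model C g w lam)
      = (\<Sum>c\<in>C. \<i> * of_real (g c j * \<rho> c) * (cnj (e c) * e c))"
    unfolding dpsi psi braket_orthogonal_sum[OF assms] by (simp add: \<rho>_def algebra_simps)
  moreover have "braket (phase_model C g w lam) (pdiff (phase_model C g w) lam k)
      = (\<Sum>c\<in>C. - \<i> * of_real (g c k * \<rho> c) * (cnj (e c) * e c))"
    unfolding dpsi psi braket_orthogonal_sum[OF assms] by (simp add: \<rho>_def algebra_simps)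
  ultimately show ?thesis
    by (simp add: uhlmann_D_def unit Im_sum sum_distrib_left[symmetric])
qed

lemma two_qubit_index_cases: "(p :: 2 \<times> 2) = (1, 1) \<or> p = (1, 2) \<or> p = (2, 1) \<or> p = (2, 2)"
  by (cases p) (metis exhaust_2)

lemma sum_UNIV_2x2:
  "sum f (UNIV :: (2 \<times> 2) set) = f (1, 1) + f (1, 2) + f (2, 1) + (f (2, 2) :: 'a::comm_monoid_add)"
proof -
  have "sum f UNIV = (\<Sum>a\<in>UNIV. \<Sum>b\<in>UNIV. f (a, b))"
    by (simp add: sum.cartesian_product)
  then show ?thesis
    by (simp add: sum_2 add.assoc)
qed

lemma less_4_cases: "(c :: nat) < 4 \<Longrightarrow> c = 0 \<or> c = 1 \<or> c = 2 \<or> c = 3"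
  by auto

lemma sum_lessThan_4: "(\<Sum>c<4. f (c :: nat)) = f 0 + f 1 + f 2 + (f 3 :: 'a::comm_monoid_add)"
  by (simp add: eval_nat_numeral add.assoc)

(* Unnormalised Bell vectors Phi+, Phi-, Psi+, Psi-, each of squared norm 2. *)
definition bell :: "nat \<Rightarrow> two_qubit_vec" where
  "bell c = (\<chi> p.
     if c = 0 then (if p = (1, 1) \<or> p = (2, 2) then 1 else 0)
     else if c = 1 then (if p = (1, 1) then 1 else if p = (2, 2) then -1 else 0)
     else if c = 2 then (if p = (1, 2) \<or> p = (2, 1) then 1 else 0)
     else (if p = (1, 2) then 1 else if p = (2, 1) then -1 else 0))"

(* bell_sign c j is the eigenvalue of \<sigma>\<^sub>j \<otimes> \<sigma>\<^sub>j on bell c. *)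
definition bell_sign :: "nat \<Rightarrow> 3 \<Rightarrow> real" where
  "bell_sign c j =
     (if c = 0 then (if j = 2 then -1 else 1)
      else if c = 1 then (if j = 1 then -1 else 1)
      else if c = 2 then (if j = 3 then -1 else 1)
      else -1)"

definition bell_proj :: "nat \<Rightarrow> two_qubit_op" where
  "bell_proj c = (\<chi> a b. bell c $ a * cnj (bell c $ b) / 2)"

lemma bell_braket:
  assumes "c < 4" "c' < 4"
  shows "braket (bell c) (bell c') = (if c = c' then 2 else 0)"
  using less_4_cases[OF assms(1)] less_4_cases[OF assms(2)]
  by (elim disjE) (simp_all add: braket_def sum_UNIV_2x2 bell_def)

lemma bell_proj_mult:
  assumes "c < 4" "c' < 4"
  shows "bell_proj c ** bell_proj c' = (if c = c' then bell_proj c else 0)"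
proof -
  have entry: "(bell_proj c ** bell_proj c') $ a $ b
      = braket (bell c) (bell c') / 2 * (bell c $ a * cnj (bell c' $ b) / 2)" for a b
    by (simp add: matrix_matrix_mult_def bell_proj_def braket_def sum_distrib_left sum_distrib_right
        sum_divide_distrib mult_ac)
  show ?thesis
    unfolding vec_eq_iff entry by (simp add: bell_braket assms bell_proj_def)
qed

lemma sum_bell_proj: "(\<Sum>c<4. bell_proj c) = mat 1"
proof -
  have "(\<Sum>c<4. bell_proj c $ a $ b) = mat 1 $ a $ b" for a b
    using two_qubit_index_cases[of a] two_qubit_index_cases[of b]
    by (elim disjE) (simp_all add: sum_lessThan_4 bell_proj_def bell_def mat_def)
  then show ?thesis
    by (simp add: vec_eq_iff sum_component)
qed

lemma kron_pauli_bell_spectral: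
  "kron (pauli j) (pauli j) $ a $ b = (\<Sum>c<4. of_real (bell_sign c j) * bell_proj c $ a $ b)"
  using exhaust_3[of j] two_qubit_index_cases[of a] two_qubit_index_cases[of b]
  by (elim disjE) (simp_all add: sum_lessThan_4 bell_proj_def bell_def bell_sign_def kron_def pauli_def
      pauli_x_def pauli_y_def pauli_z_def mk2_def)

lemma U_lam_bell_spectral:
  "U_lam lam $ a $ b = (\<Sum>c<4. exp (- \<i> * of_real (\<Sum>j\<in>UNIV. bell_sign c j * lam $ j)) * bell_proj c $ a $ b)"
proof -
  have "(\<Sum>j\<in>UNIV. of_real (lam $ j) * kron (pauli j) (pauli j) $ a $ b)
      = (\<Sum>c<4. of_real (\<Sum>j\<in>UNIV. bell_sign c j * lam $ j) * bell_proj c $ a $ b)" for a b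
    by (simp add: kron_pauli_bell_spectral sum_distrib_left sum_distrib_right mult_ac sum.swap[of _ UNIV])
  then show ?thesis
    unfolding U_lam_def
    by (intro mexp_spectral) (simp_all add: bell_proj_mult sum_bell_proj sum_distrib_left mult_ac)
qed

lemma bell_proj_mult_vec: "bell_proj c *v v = (braket (bell c) v / 2) *s bell c"
  by (simp add: vec_eq_iff matrix_vector_mult_def bell_proj_def braket_def sum_distrib_left
      sum_divide_distrib mult_ac)

lemma U_lam_mult_vec:
  "U_lam lam *v v = phase_model {..<4} bell_sign (\<lambda>c. (braket (bell c) v / 2) *s bell c) lam"
proof -
  have "(U_lam lam *v v) $ a
      = (\<Sum>c<4. exp (- \<i> * of_real (\<Sum>j\<in>UNIV. bell_sign c j * lam $ j)) * (bell_proj c *v v) $ a)" for a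
    by (simp add: matrix_vector_mult_def U_lam_bell_spectral sum_distrib_left sum_distrib_right mult_ac
        sum.swap[of _ UNIV])
  then show ?thesis
    by (simp add: vec_eq_iff phase_model_def sum_component bell_proj_mult_vec mult_ac)
qed

theorem mainTheorem1:
  fixes psi0 :: two_qubit_vec
  assumes "braket psi0 psi0 = 1"
  shows "\<forall>lam j k. uhlmann_D (\<lambda>l. U_lam l *v psi0) lam j k = 0"
proof (intro allI)
  fix lam j k
  let ?w = "\<lambda>c. (braket (bell c) psi0 / 2) *s bell c"
  have "pairwise (\<lambda>c c'. braket (?w c) (?w c') = 0) {..<4}"
    by (simp add: pairwise_def braket_vector_smult bell_braket)
  then show "uhlmann_D (\<lambda>l. U_lam l *v psi0) lam j k = 0"
    unfolding U_lam_mult_vec by (intro uhlmann_D_phase_model) simp_all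
qed

end
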